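(* Let $p \geq 5$ be a prime and let $a_1,a_2,a_3 \in \mathbb{F}_p$ with $s := 3+a_1+a_2+a_3 \neq 0$ in $\mathbb{F}_p$. Let $S \subseteq \mathbb{F}_p^3$ be the set of solutions $(x_1,x_2,x_3)$ of \[ x_1^2+x_2^2+x_3^2+a_1x_2x_3+a_2x_1x_3+a_3x_1x_2 = s\,x_1x_2x_3, \] and for $i \in \{1,2,3\}$ (indices taken modulo $3$) let $m_i : S \to S$ be the map replacing $x_i$ by $-x_i + s x_{i-1}x_{i+1} - a_{i+1}x_{i-1} - a_{i-1}x_{i+1}$ and leaving the other two coordinates unchanged. Consider the orbits of the group generated by $m_1,m_2,m_3$ acting on $S$. \begin{enumerate} \item If $a_i^2 \neq 4$ for all $i=1,2,3$, then every orbit other than the orbit $\{(0,0,0)\}$ has size divisible by $p$. \item If there is an index $i$ with $a_i^2 = 4$ and $2a_{i-1} = a_{i+1}a_i$ (indices modulo $3$), then every orbit other than $\{(0,0,0)\}$ has size divisible by $p$. \end{enumerate}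
   Context: Each $m_i$ is an involution of $S$ (it exchanges the two roots of the defining equation viewed as a quadratic in $x_i$). The point $(0,0,0)$ always lies in $S$ and is fixed by all moves. *)

theory Defs
  imports "HOL-Computational_Algebra.Primes"
begin

text \<open>The field F_p is modelled as an arbitrary finite field type 'a with exactly p elements
  (p prime), which is isomorphic to F_p. Points of F_p^3 are triples.\<close>

definition sval :: "'a::field \<Rightarrow> 'a \<Rightarrow> 'a \<Rightarrow> 'a" where
  "sval a1 a2 a3 = 3 + a1 + a2 + a3"

definition surf :: "'a::field \<Rightarrow> 'a \<Rightarrow> 'a \<Rightarrow> ('a \<times> 'a \<times> 'a) set" where
  "surf a1 a2 a3 = {(x1, x2, x3).
     x1^2 + x2^2 + x3^2 + a1*x2*x3 + a2*x1*x3 + a3*x1*x2 = sval a1 a2 a3 * x1*x2*x3}"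

definition move :: "'a::field \<Rightarrow> 'a \<Rightarrow> 'a \<Rightarrow> nat \<Rightarrow> 'a \<times> 'a \<times> 'a \<Rightarrow> 'a \<times> 'a \<times> 'a" where
  "move a1 a2 a3 i = (\<lambda>(x1, x2, x3). let s = sval a1 a2 a3 in
     if i = 1 then (- x1 + s*x3*x2 - a2*x3 - a3*x2, x2, x3)
     else if i = 2 then (x1, - x2 + s*x1*x3 - a3*x1 - a1*x3, x3)
     else (x1, x2, - x3 + s*x2*x1 - a1*x2 - a2*x1))"

text \<open>Orbit of P under the group generated by m_1, m_2, m_3. Since each m_i is an involution,
  every group element is a finite composition of the m_i.\<close>
definition orbit :: "'a::field \<Rightarrow> 'a \<Rightarrow> 'a \<Rightarrow> 'a \<times> 'a \<times> 'a \<Rightarrow> ('a \<times> 'a \<times> 'a) set" where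
  "orbit a1 a2 a3 P = {foldr (move a1 a2 a3) w P | w. set w \<subseteq> {1, 2, 3}}"

end

theory Submission
  imports Defs "HOL-Number_Theory.Residues"
begin

(* The constant function 1 on S - {0} is a coboundary for the three moves: there are functions
   H_1, H_2, H_3 on S - {0} with sum_i (H_i P - H_i (m_i P)) = 1.  Summing this over an orbit A,
   which every m_i permutes, telescopes to |A| = 0 in F_p.
   Off the coordinate planes H_i P = - x_i / (s x_1 x_2 x_3) works: the equation of S turns the
   sum into 3 - 2 = 1.  A nonzero point of S has at most one vanishing coordinate x_j, and then
   the other two satisfy u^2 + v^2 + a_j u v = 0; there H_k gets a correction c_jk / x_k whose
   coefficients solve a linear system with matrix [[2, a_j], [a_j, 2]].  The hypotheses on the
   a_i make these three systems solvable. *)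

lemma of_nat_card_eq_0_if_one_is_coboundary:
  fixes H :: "'i \<Rightarrow> 'b \<Rightarrow> 'a::ring_1"
  assumes perm: "\<And>i. i \<in> I \<Longrightarrow> bij_betw (f i) A A"
    and coboundary: "\<And>Q. Q \<in> A \<Longrightarrow> (\<Sum>i\<in>I. H i Q - H i (f i Q)) = 1"
  shows "of_nat (card A) = (0::'a)"
proof -
  have "of_nat (card A) = (\<Sum>Q\<in>A. \<Sum>i\<in>I. H i Q - H i (f i Q))"
    using coboundary by simp
  also have "\<dots> = (\<Sum>i\<in>I. (\<Sum>Q\<in>A. H i Q) - (\<Sum>Q\<in>A. H i (f i Q)))"
    by (subst sum.swap) (simp add: sum_subtractf)
  also have "\<dots> = 0"
    by (rule sum.neutral) (simp add: sum.reindex_bij_betw[OF perm])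
  finally show ?thesis .
qed

lemma CHAR_eq_prime_card:
  assumes "prime p" and "card (UNIV :: 'a::{finite,field} set) = p"
  shows "CHAR('a) = p"
proof -
  have "prime CHAR('a)"
    by (intro prime_CHAR_semidom finite_imp_CHAR_pos) simp
  moreover have "CHAR('a) dvd p"
    using CHAR_dvd_CARD[where 'a='a] assms(2) by simp
  ultimately show ?thesis
    using assms(1) primes_dvd_imp_eq by blast
qed

lemma two_neq_zero_if_card_odd_prime:
  assumes "prime p" and "p \<noteq> 2" and "card (UNIV :: 'a::{finite,field} set) = p"
  shows "(2::'a) \<noteq> 0"
proof
  assume "(2::'a) = 0"
  then have "p dvd 2"
    using of_nat_eq_0_iff_char_dvd[of 2, where 'a='a] CHAR_eq_prime_card[OF assms(1,3)] by simp
  then show False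
    using assms(1,2) two_is_prime_nat primes_dvd_imp_eq by blast
qed

lemma quadratic_other_root:
  fixes u v k :: "'a::comm_ring_1"
  assumes "u^2 + v^2 + k*u*v = 0"
  shows "(- u - k*v) * u = v^2"
proof -
  have "(- u - k*v) * u = v^2 - (u^2 + v^2 + k*u*v)"
    by (simp add: algebra_simps power2_eq_square)
  with assms show ?thesis by simp
qed

lemma quadratic_other_root_nonzero:
  fixes u v k :: "'a::idom"
  assumes "u^2 + v^2 + k*u*v = 0" and "v \<noteq> 0"
  shows "- u - k*v \<noteq> 0"
  using quadratic_other_root[OF assms(1)] assms(2) by auto

lemma quadratic_reciprocal_jump:
  fixes u v k :: "'a::field"
  assumes root: "u^2 + v^2 + k*u*v = 0" and "u \<noteq> 0" "v \<noteq> 0"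
  shows "1/u - 1/(- u - k*v) = 2/u + k/v"
proof -
  have "1/(- u - k*v) = u/v^2"
    using quadratic_other_root[OF root] quadratic_other_root_nonzero[OF root assms(3)] assms(3)
    by (simp add: field_simps)
  moreover have "1/u - u/v^2 - (2/u + k/v) = - (u^2 + v^2 + k*u*v) / (u*v^2)"
    using assms(2,3) by (simp add: field_simps power2_eq_square)
  ultimately show ?thesis
    using root by simp
qed

lemma coboundary_identity_on_axis_plane:
  fixes u v k \<alpha> \<beta> c d :: "'a::field"
  assumes root: "u^2 + v^2 + k*u*v = 0" and "u \<noteq> 0" "v \<noteq> 0"
    and "2*c + k*d = \<alpha>" "k*c + 2*d = \<beta>"
  shows "1 - \<alpha>/u - \<beta>/v + c * (1/u - 1/(- u - k*v)) + d * (1/v - 1/(- v - k*u)) = 1"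
proof -
  have root': "v^2 + u^2 + k*v*u = 0"
    using root by (simp add: algebra_simps)
  have "c * (1/u - 1/(- u - k*v)) + d * (1/v - 1/(- v - k*u)) = (2*c + k*d)/u + (k*c + 2*d)/v"
    using assms(2,3)
    by (simp add: quadratic_reciprocal_jump[OF root assms(2,3)]
        quadratic_reciprocal_jump[OF root' assms(3,2)] field_simps)
  then show ?thesis
    using assms(4,5) by simp
qed

(* Consistency of the correction system for the plane x_1 = 0, whose matrix is singular
   exactly when a_1^2 = 4. *)
definition axis_compatible :: "'a::field \<Rightarrow> 'a \<Rightarrow> 'a \<Rightarrow> bool"
  where "axis_compatible a1 a2 a3 \<longleftrightarrow> (a1^2 = 4 \<longrightarrow> 2*a3 = a2*a1)"

lemma axis_system_solvable:
  fixes k A B s :: "'a::field"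
  assumes "(2::'a) \<noteq> 0" and "axis_compatible k A B"
  shows "\<exists>c d. 2*c + k*d = A/s \<and> k*c + 2*d = B/s"
proof (cases "k^2 = 4")
  case True
  then have "k*A = 2*B"
    using assms(2) by (simp add: axis_compatible_def mult.commute)
  then show ?thesis
    using assms(1) by (intro exI[of _ "A/(2*s)"] exI[of _ 0]) (simp add: field_simps)
next
  case False
  define \<Delta> where "\<Delta> = 4 - k^2"
  have "\<Delta> \<noteq> 0" "2*(2*A - k*B) + k*(2*B - k*A) = \<Delta>*A" "k*(2*A - k*B) + 2*(2*B - k*A) = \<Delta>*B"
    using False by (simp_all add: \<Delta>_def algebra_simps power2_eq_square)
  then have "2 * ((2*A - k*B) / (\<Delta>*s)) + k * ((2*B - k*A) / (\<Delta>*s)) = A/s"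
    "k * ((2*A - k*B) / (\<Delta>*s)) + 2 * ((2*B - k*A) / (\<Delta>*s)) = B/s"
    by (simp_all add: add_divide_distrib[of _ _ "\<Delta>*s", symmetric])
  then show ?thesis by blast
qed

lemma square_eq_4_double_mult_swap:
  fixes a b c :: "'a::field"
  assumes "a^2 = 4" and "(2::'a) \<noteq> 0"
  shows "2*b = a*c \<longleftrightarrow> 2*c = a*b"
proof -
  have "2*c = a*b" if "2*b = a*c" for b c
  proof -
    have "2*(a*b) = a*(2*b)" by (simp add: ac_simps)
    also have "\<dots> = a^2 * c" using that by (simp add: power2_eq_square ac_simps)
    also have "\<dots> = 2*(2*c)" using assms(1) by simp
    finally have "2*(a*b) = 2*(2*c)" .
    then show ?thesis using mult_left_cancel[OF assms(2)] by metis
  qed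
  then show ?thesis by blast
qed

lemma axis_compatible_rotations:
  fixes a1 a2 a3 :: "'a::field"
  assumes "(2::'a) \<noteq> 0" and "a1^2 = 4" and "2*a3 = a2*a1"
  shows "axis_compatible a1 a2 a3" "axis_compatible a2 a3 a1" "axis_compatible a3 a1 a2"
proof -
  show "axis_compatible a1 a2 a3"
    using assms(3) by (simp add: axis_compatible_def)
  show "axis_compatible a2 a3 a1"
    using assms(3) square_eq_4_double_mult_swap[of a2 a3 a1, OF _ assms(1)]
    by (simp add: axis_compatible_def mult.commute)
  show "axis_compatible a3 a1 a2"
    using assms(3) square_eq_4_double_mult_swap[OF assms(2,1), of a3 a2]
    by (simp add: axis_compatible_def mult.commute)
qed

lemma move_involution: "move a1 a2 a3 i (move a1 a2 a3 i P) = P"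
  by (cases P) (auto simp: move_def Let_def)

lemma move_zero: "move a1 a2 a3 i (0, 0, 0) = (0, 0, 0)"
  by (simp add: move_def Let_def)

lemma move_in_surf:
  assumes "P \<in> surf a1 a2 a3"
  shows "move a1 a2 a3 i P \<in> surf a1 a2 a3"
proof -
  obtain x y z where P: "P = (x, y, z)" by (cases P)
  define s where "s = sval a1 a2 a3"
  let ?E = "\<lambda>x y z. x^2 + y^2 + z^2 + a1*y*z + a2*x*z + a3*x*y - s*x*y*z"
  have "?E x y z = 0"
    using assms by (simp add: P surf_def s_def)
  moreover have "?E (- x + s*z*y - a2*z - a3*y) y z = ?E x y z"
    "?E x (- y + s*x*z - a3*x - a1*z) z = ?E x y z"
    "?E x y (- z + s*y*x - a1*y - a2*x) = ?E x y z"
    by (simp_all add: algebra_simps power2_eq_square)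
  ultimately show ?thesis
    unfolding P move_def surf_def Let_def s_def[symmetric] by auto
qed

lemma orbit_subset_surf:
  assumes "P \<in> surf a1 a2 a3"
  shows "orbit a1 a2 a3 P \<subseteq> surf a1 a2 a3"
proof -
  have "foldr (move a1 a2 a3) w P \<in> surf a1 a2 a3" for w
    using assms by (induction w) (simp_all add: move_in_surf)
  then show ?thesis
    by (auto simp: orbit_def)
qed

lemma orbit_zero: "orbit a1 a2 a3 (0, 0, 0) = {(0, 0, 0)}"
proof -
  have "foldr (move a1 a2 a3) w (0, 0, 0) = (0, 0, 0)" for w
    by (induction w) (simp_all add: move_zero)
  then show ?thesis
    unfolding orbit_def by (auto intro: exI[of _ "[]"])
qed

lemma zero_notin_orbit:
  assumes "P \<noteq> (0, 0, 0)"
  shows "(0, 0, 0) \<notin> orbit a1 a2 a3 P"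
proof -
  have "foldr (move a1 a2 a3) w P \<noteq> (0, 0, 0)" for w
  proof (induction w)
    case (Cons i w)
    then show ?case
      using move_involution[of a1 a2 a3 i "foldr (move a1 a2 a3) w P"] by (auto simp: move_zero)
  qed (simp add: assms)
  then show ?thesis
    unfolding orbit_def by force
qed

lemma move_in_orbit:
  assumes "Q \<in> orbit a1 a2 a3 P" and "i \<in> {1, 2, 3}"
  shows "move a1 a2 a3 i Q \<in> orbit a1 a2 a3 P"
proof -
  obtain w where "Q = foldr (move a1 a2 a3) w P" "set w \<subseteq> {1, 2, 3}"
    using assms(1) by (auto simp: orbit_def)
  then show ?thesis
    using assms(2) unfolding orbit_def by (intro CollectI exI[of _ "i # w"]) auto
qed

lemma bij_betw_move_orbit:
  assumes "i \<in> {1, 2, 3}"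
  shows "bij_betw (move a1 a2 a3 i) (orbit a1 a2 a3 P) (orbit a1 a2 a3 P)"
  by (rule bij_betw_byWitness[where f' = "move a1 a2 a3 i"])
    (auto simp: move_involution move_in_orbit[OF _ assms])

lemma surf_nonzero_cases:
  assumes "(x, y, z) \<in> surf a1 a2 a3" and "(x, y, z) \<noteq> (0, 0, 0)"
  obtains "x \<noteq> 0" "y \<noteq> 0" "z \<noteq> 0"
    | "x = 0" "y \<noteq> 0" "z \<noteq> 0"
    | "y = 0" "z \<noteq> 0" "x \<noteq> 0"
    | "z = 0" "x \<noteq> 0" "y \<noteq> 0"
  using assms by (cases "x = 0"; cases "y = 0"; cases "z = 0") (auto simp: surf_def)

(* c_jk is the correction to H_k on the plane x_j = 0; there the leading term - x_k / (s ...)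
   vanishes because division by zero yields zero. *)
definition potential ::
    "'a::field \<Rightarrow> 'a \<Rightarrow> 'a \<Rightarrow> 'a \<Rightarrow> 'a \<Rightarrow> 'a \<Rightarrow> 'a \<Rightarrow> 'a \<Rightarrow> 'a \<Rightarrow> nat \<Rightarrow> 'a \<times> 'a \<times> 'a \<Rightarrow> 'a"
  where "potential a1 a2 a3 c12 c13 c23 c21 c31 c32 i = (\<lambda>(x1, x2, x3). let s = sval a1 a2 a3 in
     if i = 1 then - x1 / (s*x2*x3) + (if x2 = 0 then c21 / x1 else 0) + (if x3 = 0 then c31 / x1 else 0)
     else if i = 2 then - x2 / (s*x1*x3) + (if x3 = 0 then c32 / x2 else 0) + (if x1 = 0 then c12 / x2 else 0)
     else - x3 / (s*x1*x2) + (if x1 = 0 then c13 / x3 else 0) + (if x2 = 0 then c23 / x3 else 0))"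

lemma potential_coboundary:
  fixes a1 a2 a3 :: "'a::field"
  defines "s \<equiv> sval a1 a2 a3"
  assumes "s \<noteq> 0"
    and axis1: "2*c12 + a1*c13 = a2/s" "a1*c12 + 2*c13 = a3/s"
    and axis2: "2*c23 + a2*c21 = a3/s" "a2*c23 + 2*c21 = a1/s"
    and axis3: "2*c31 + a3*c32 = a1/s" "a3*c31 + 2*c32 = a2/s"
    and "P \<in> surf a1 a2 a3" and "P \<noteq> (0, 0, 0)"
  shows "(\<Sum>i\<in>{1, 2, 3}. potential a1 a2 a3 c12 c13 c23 c21 c31 c32 i P
           - potential a1 a2 a3 c12 c13 c23 c21 c31 c32 i (move a1 a2 a3 i P)) = 1"
    (is "?sum = 1")
proof -
  obtain x y z where P: "P = (x, y, z)" by (cases P)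
  with assms have surf: "(x, y, z) \<in> surf a1 a2 a3" and nonzero: "(x, y, z) \<noteq> (0, 0, 0)"
    by simp_all
  have eq: "x^2 + y^2 + z^2 + a1*y*z + a2*x*z + a3*x*y = s*x*y*z"
    using surf by (simp add: surf_def s_def)
  note unfold = P potential_def move_def Let_def s_def[symmetric]
  from surf nonzero show ?thesis
  proof (cases rule: surf_nonzero_cases)
    case 1
    then have "?sum = 3 - 2 * (x^2 + y^2 + z^2 + a1*y*z + a2*x*z + a3*x*y) / (s*x*y*z)"
      using \<open>s \<noteq> 0\<close> by (simp add: unfold field_simps power2_eq_square)
    then show ?thesis
      using eq 1 \<open>s \<noteq> 0\<close> by simp
  next
    case 2
    then have root: "y^2 + z^2 + a1*y*z = 0"
      using eq by simp
    have "?sum = 1 - (a2/s)/y - (a3/s)/z + c12 * (1/y - 1/(- y - a1*z)) + c13 * (1/z - 1/(- z - a1*y))"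
      using 2 \<open>s \<noteq> 0\<close> quadratic_other_root_nonzero[OF root] quadratic_other_root_nonzero[of z y a1] root
      by (simp add: unfold field_simps power2_eq_square)
    also have "\<dots> = 1"
      using coboundary_identity_on_axis_plane[OF root 2(2,3) axis1] .
    finally show ?thesis .
  next
    case 3
    then have root: "z^2 + x^2 + a2*z*x = 0"
      using eq by (simp add: algebra_simps)
    have "?sum = 1 - (a3/s)/z - (a1/s)/x + c23 * (1/z - 1/(- z - a2*x)) + c21 * (1/x - 1/(- x - a2*z))"
      using 3 \<open>s \<noteq> 0\<close> quadratic_other_root_nonzero[OF root] quadratic_other_root_nonzero[of x z a2] root
      by (simp add: unfold field_simps power2_eq_square)
    also have "\<dots> = 1"
      using coboundary_identity_on_axis_plane[OF root 3(2,3) axis2] .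
    finally show ?thesis .
  next
    case 4
    then have root: "x^2 + y^2 + a3*x*y = 0"
      using eq by simp
    have "?sum = 1 - (a1/s)/x - (a2/s)/y + c31 * (1/x - 1/(- x - a3*y)) + c32 * (1/y - 1/(- y - a3*x))"
      using 4 \<open>s \<noteq> 0\<close> quadratic_other_root_nonzero[OF root] quadratic_other_root_nonzero[of y x a3] root
      by (simp add: unfold field_simps power2_eq_square)
    also have "\<dots> = 1"
      using coboundary_identity_on_axis_plane[OF root 4(2,3) axis3] .
    finally show ?thesis .
  qed
qed

lemma prime_dvd_card_orbit:
  fixes a1 a2 a3 :: "'a::{finite,field}"
  assumes "prime p" and "card (UNIV :: 'a set) = p" and "(2::'a) \<noteq> 0"
    and "sval a1 a2 a3 \<noteq> 0"
    and "axis_compatible a1 a2 a3" "axis_compatible a2 a3 a1" "axis_compatible a3 a1 a2"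
    and P: "P \<in> surf a1 a2 a3" "orbit a1 a2 a3 P \<noteq> {(0, 0, 0)}"
  shows "p dvd card (orbit a1 a2 a3 P)"
proof -
  let ?s = "sval a1 a2 a3"
  obtain c12 c13 where axis1: "2*c12 + a1*c13 = a2/?s" "a1*c12 + 2*c13 = a3/?s"
    using axis_system_solvable[OF assms(3,5)] by blast
  obtain c23 c21 where axis2: "2*c23 + a2*c21 = a3/?s" "a2*c23 + 2*c21 = a1/?s"
    using axis_system_solvable[OF assms(3,6)] by blast
  obtain c31 c32 where axis3: "2*c31 + a3*c32 = a1/?s" "a3*c31 + 2*c32 = a2/?s"
    using axis_system_solvable[OF assms(3,7)] by blast
  have coboundary:
    "(\<Sum>i\<in>{1, 2, 3}. potential a1 a2 a3 c12 c13 c23 c21 c31 c32 i Q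
      - potential a1 a2 a3 c12 c13 c23 c21 c31 c32 i (move a1 a2 a3 i Q)) = 1"
    if "Q \<in> orbit a1 a2 a3 P" for Q
  proof (rule potential_coboundary[OF assms(4) axis1 axis2 axis3])
    show "Q \<in> surf a1 a2 a3"
      using that orbit_subset_surf[OF P(1)] by blast
    show "Q \<noteq> (0, 0, 0)"
      using that zero_notin_orbit P(2) orbit_zero by metis
  qed
  have "of_nat (card (orbit a1 a2 a3 P)) = (0::'a)"
    by (rule of_nat_card_eq_0_if_one_is_coboundary[OF bij_betw_move_orbit coboundary])
  then show ?thesis
    by (simp add: of_nat_eq_0_iff_char_dvd CHAR_eq_prime_card[OF assms(1,2)])
qed

theorem theorem1p1:
  fixes a1 a2 a3 :: "'a::{finite, field}" and p :: nat
  assumes "prime p" and "p \<ge> 5" and "card (UNIV :: 'a set) = p"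
    and "sval a1 a2 a3 \<noteq> 0"
  shows "(a1^2 \<noteq> 4 \<and> a2^2 \<noteq> 4 \<and> a3^2 \<noteq> 4 \<longrightarrow>
           (\<forall>P \<in> surf a1 a2 a3. orbit a1 a2 a3 P \<noteq> {(0, 0, 0)} \<longrightarrow>
              p dvd card (orbit a1 a2 a3 P)))
       \<and> ((a1^2 = 4 \<and> 2*a3 = a2*a1 \<or> a2^2 = 4 \<and> 2*a1 = a3*a2 \<or> a3^2 = 4 \<and> 2*a2 = a1*a3) \<longrightarrow>
           (\<forall>P \<in> surf a1 a2 a3. orbit a1 a2 a3 P \<noteq> {(0, 0, 0)} \<longrightarrow>
              p dvd card (orbit a1 a2 a3 P)))"
proof -
  have two: "(2::'a) \<noteq> 0"
    using assms(1-3) by (intro two_neq_zero_if_card_odd_prime) auto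
  note divisible = prime_dvd_card_orbit[OF assms(1,3) two assms(4)]
  show ?thesis
  proof (intro conjI impI ballI)
    assume "a1^2 \<noteq> 4 \<and> a2^2 \<noteq> 4 \<and> a3^2 \<noteq> 4"
    then show "p dvd card (orbit a1 a2 a3 P)"
      if "P \<in> surf a1 a2 a3" "orbit a1 a2 a3 P \<noteq> {(0, 0, 0)}" for P
      using divisible that by (simp add: axis_compatible_def)
  next
    assume "a1^2 = 4 \<and> 2*a3 = a2*a1 \<or> a2^2 = 4 \<and> 2*a1 = a3*a2 \<or> a3^2 = 4 \<and> 2*a2 = a1*a3"
    then have "axis_compatible a1 a2 a3 \<and> axis_compatible a2 a3 a1 \<and> axis_compatible a3 a1 a2"
      using axis_compatible_rotations[OF two] by blast
    then show "p dvd card (orbit a1 a2 a3 P)"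
      if "P \<in> surf a1 a2 a3" "orbit a1 a2 a3 P \<noteq> {(0, 0, 0)}" for P
      using divisible that by blast
  qed
qed

end
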